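(* Let $N\ge1$, let $(\mathbf s^0,\dots,\mathbf s^{N-1})$ be an $(N,1,\mathbb L)$-$N$-CO-SF where $\mathbf s^m$ has length $l^{(m)}N$, and let $\mathbf U=[u^n_k]$ be an $N\times N$ unitary-like matrix with rows $\mathbf u^0,\dots,\mathbf u^{N-1}$. For $0\le m,n<N$ define the sequence $\mathbf c^m_n$ of length $l^{(m)}N$ by $$c^m_n(k)=u^n_{[k]_N}\,s^m(k),\qquad 0\le k<l^{(m)}N$$ (equivalently $\mathbf c^m_n=\mathbf u^n\odot\mathbb S^{(m)}$, where $\mathbb S^{(m)}$ is the set of the $l^{(m)}N$ length-one sequences $(s^m(k))$, $0\le k<l^{(m)}N$). Then, with $\mathbb C^m=(\mathbf c^m_0,\dots,\mathbf c^m_{N-1})$, the family $(\mathbb C^0,\dots,\mathbb C^{N-1})$ is an $(N,N,\mathbb L)$-CCC.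
   Context: All sequences are finite complex sequences. A sequence $\mathbf s=(s_0,\dots,s_{L-1})$ of length $L$ is identified with the function $s:\mathbb Z\to\mathbb C$ given by $s(n)=s_n$ for $0\le n<L$ and $s(n)=0$ otherwise. $[a]_b$ denotes the remainder of $a$ modulo $b$. For sequences $\mathbf s,\mathbf s'$ of lengths $L,L'$ (possibly different), the aperiodic correlation is $R_{\mathbf s,\mathbf s'}(\tau)=\sum_{l=0}^{L-1}s(l)\,\overline{s'(l+\tau)}$ for $\tau\in\mathbb Z$. The energy of $\mathbf s$ is $E_{\mathbf s}=R_{\mathbf s,\mathbf s}(0)$. An $(M,1,\mathbb L)$-$N$-shift cross-orthogonal sequence family ($N$-CO-SF) is an indexed family $(\mathbf s^0,\dots,\mathbf s^{M-1})$ of complex sequences, where $\mathbf s^m$ has length $L^{(m)}$ divisible by $N$, and $\mathbb L$ is the set of distinct values among $L^{(0)},\dots,L^{(M-1)}$, such that for all $0\le m,m'<M$ and all $k\in\mathbb Z$, $R_{\mathbf s^m,\mathbf s^{m'}}(kN)=E_{\mathbf s^m}\,\delta(m-m')\,\delta(k)$, where $\delta$ is the Kronecker delta. An $n\times n$ complex matrix $\mathbf U$ is unitary-like if $\mathbf U\mathbf U^H=\mathbf U^H\mathbf U=\alpha\mathbf I_n$ for some real $\alpha>0$. An $(N,L)$-sequence set is an indexed set $\mathbb S=(\mathbf s_0,\dots,\mathbf s_{N-1})$ of $N$ sequences of common length $L$. For an $(N,L)$-sequence set $\mathbb S$ and an $(N,L')$-sequence set $\mathbb S'=(\mathbf s'_0,\dots,\mathbf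 s'_{N-1})$, the correlation sum is $\mathcal R_{\mathbb S,\mathbb S'}(\tau)=\sum_{n=0}^{N-1}R_{\mathbf s_n,\mathbf s'_n}(\tau)$, and the energy of $\mathbb S$ is $E_{\mathbb S}=\mathcal R_{\mathbb S,\mathbb S}(0)$. An $(M,N,\mathbb L)$-complete complementary code (CCC) is an indexed family $(\mathbb C^0,\dots,\mathbb C^{M-1})$ where $\mathbb C^m=(\mathbf c^m_0,\dots,\mathbf c^m_{N-1})$ is an $(N,L^{(m)})$-sequence set, $\mathbb L$ is the set of distinct values among the $L^{(m)}$, and for all $0\le m,m'<M$ and all $\tau\in\mathbb Z$, $\mathcal R_{\mathbb C^m,\mathbb C^{m'}}(\tau)=E_{\mathbb C^m}\,\delta(m-m')\,\delta(\tau)$. *)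

theory Defs
  imports Complex_Main
begin

text \<open>A finite complex sequence is a list; it is identified with the function on int
  that is zero outside the index range 0..length-1.\<close>

definition seq_at :: "complex list \<Rightarrow> int \<Rightarrow> complex" where
  "seq_at s n = (if 0 \<le> n \<and> n < int (length s) then s ! nat n else 0)"

definition aper_corr :: "complex list \<Rightarrow> complex list \<Rightarrow> int \<Rightarrow> complex" where
  "aper_corr s s' \<tau> = (\<Sum>l<length s. seq_at s (int l) * cnj (seq_at s' (int l + \<tau>)))"

definition seq_energy :: "complex list \<Rightarrow> complex" where
  "seq_energy s = aper_corr s s 0"

definition is_N_CO_SF :: "nat \<Rightarrow> nat \<Rightarrow> nat set \<Rightarrow> (nat \<Rightarrow> complex list) \<Rightarrow> bool" where
  "is_N_CO_SF N M Lset S \<longleftrightarrow>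
     (\<forall>m<M. N dvd length (S m)) \<and>
     Lset = (\<lambda>m. length (S m)) ` {..<M} \<and>
     (\<forall>m<M. \<forall>m'<M. \<forall>k::int.
        aper_corr (S m) (S m') (k * int N) =
          (if m = m' \<and> k = 0 then seq_energy (S m) else 0))"

definition unitary_like :: "nat \<Rightarrow> (nat \<Rightarrow> nat \<Rightarrow> complex) \<Rightarrow> bool" where
  "unitary_like n U \<longleftrightarrow> (\<exists>\<alpha>::real. \<alpha> > 0 \<and>
     (\<forall>i<n. \<forall>j<n. (\<Sum>k<n. U i k * cnj (U j k)) = (if i = j then complex_of_real \<alpha> else 0)) \<and>
     (\<forall>i<n. \<forall>j<n. (\<Sum>k<n. cnj (U k i) * U k j) = (if i = j then complex_of_real \<alpha> else 0)))"

definition corr_sum :: "nat \<Rightarrow> (nat \<Rightarrow> complex list) \<Rightarrow> (nat \<Rightarrow> complex list) \<Rightarrow> int \<Rightarrow> complex" where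
  "corr_sum N C C' \<tau> = (\<Sum>n<N. aper_corr (C n) (C' n) \<tau>)"

definition set_energy :: "nat \<Rightarrow> (nat \<Rightarrow> complex list) \<Rightarrow> complex" where
  "set_energy N C = corr_sum N C C 0"

definition is_CCC :: "nat \<Rightarrow> nat \<Rightarrow> nat set \<Rightarrow> (nat \<Rightarrow> nat \<Rightarrow> complex list) \<Rightarrow> bool" where
  "is_CCC M N Lset C \<longleftrightarrow>
     (\<exists>L :: nat \<Rightarrow> nat. (\<forall>m<M. \<forall>n<N. length (C m n) = L m) \<and> Lset = L ` {..<M}) \<and>
     (\<forall>m<M. \<forall>m'<M. \<forall>\<tau>::int.
        corr_sum N (C m) (C m') \<tau> = (if m = m' \<and> \<tau> = 0 then set_energy N (C m) else 0))"

definition ccc_from_cosf :: "nat \<Rightarrow> (nat \<Rightarrow> nat \<Rightarrow> complex) \<Rightarrow> (nat \<Rightarrow> complex list) \<Rightarrow> nat \<Rightarrow> nat \<Rightarrow> complex list" where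
  "ccc_from_cosf N U S m n = map (\<lambda>k. U n (k mod N) * (S m ! k)) [0..<length (S m)]"

end

theory Submission
  imports Defs
begin

text \<open>
  Summing the aperiodic correlations of
  c^m_n and c^{m'}_n over the rows n and exchanging the two sums, the row index only
  enters through the inner products of two columns of U, which by the unitary-like
  property equal alpha if the column indices [l]_N and [l+tau]_N agree and 0 otherwise.
  They agree exactly when N divides tau.  Hence
    corr_sum(C^m, C^{m'})(tau) = alpha * R_{s^m,s^{m'}}(tau)  if N | tau,  and 0 otherwise,
  and the N-shift cross-orthogonality of the family s^m turns this into the complete
  complementary property.
\<close>

lemma length_ccc_from_cosf [simp]:
  "length (ccc_from_cosf N U S m n) = length (S m)"
  unfolding ccc_from_cosf_def by simp

lemma seq_at_ccc_from_cosf: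
  "seq_at (ccc_from_cosf N U S m n) j = U n (nat j mod N) * seq_at (S m) j"
  unfolding seq_at_def ccc_from_cosf_def by auto

text \<open>The columns of a unitary-like matrix are orthogonal with common squared norm alpha;
  this is the half U^H U = alpha I of the definition, written as a sum over rows.\<close>
lemma unitary_like_columns:
  assumes "unitary_like n U"
  obtains \<alpha> :: real where
    "\<forall>a<n. \<forall>b<n. (\<Sum>k<n. U k a * cnj (U k b)) = (if a = b then complex_of_real \<alpha> else 0)"
proof -
  obtain \<alpha> :: real where col:
    "\<forall>i<n. \<forall>j<n. (\<Sum>k<n. cnj (U k i) * U k j) = (if i = j then complex_of_real \<alpha> else 0)"
    using assms unfolding unitary_like_def by blast
  have "(\<Sum>k<n. U k a * cnj (U k b)) = (if a = b then complex_of_real \<alpha> else 0)"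
    if "a < n" "b < n" for a b
  proof -
    have "(\<Sum>k<n. U k a * cnj (U k b)) = (\<Sum>k<n. cnj (U k b) * U k a)"
      by (simp add: mult.commute)
    then show ?thesis using col that by auto
  qed
  then show thesis using that by blast
qed

lemma mod_eq_shift_iff:
  fixes l :: nat and \<tau> :: int
  assumes "0 \<le> int l + \<tau>"
  shows "l mod N = nat (int l + \<tau>) mod N \<longleftrightarrow> int N dvd \<tau>"
proof -
  have "l mod N = nat (int l + \<tau>) mod N \<longleftrightarrow> int l mod int N = (int l + \<tau>) mod int N"
    using assms by (metis int_nat_eq of_nat_eq_iff zmod_int)
  also have "\<dots> \<longleftrightarrow> int N dvd \<tau>"
    by (simp add: mod_eq_dvd_iff)
  finally show ?thesis .
qed

lemma corr_sum_ccc_from_cosf: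
  assumes N: "N \<ge> 1"
    and col: "\<forall>a<N. \<forall>b<N. (\<Sum>k<N. U k a * cnj (U k b)) = (if a = b then complex_of_real \<alpha> else 0)"
  shows "corr_sum N (ccc_from_cosf N U S m) (ccc_from_cosf N U S m') \<tau>
     = complex_of_real \<alpha> * (if int N dvd \<tau> then aper_corr (S m) (S m') \<tau> else 0)"
proof -
  define r where "r l = seq_at (S m) (int l) * cnj (seq_at (S m') (int l + \<tau>))" for l
  have phase: "r l * (\<Sum>n<N. U n (l mod N) * cnj (U n (nat (int l + \<tau>) mod N)))
      = complex_of_real \<alpha> * (if int N dvd \<tau> then r l else 0)" for l
  proof (cases "0 \<le> int l + \<tau>")
    case False
    then have "r l = 0" by (simp add: r_def seq_at_def)
    then show ?thesis by simp
  next
    case True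
    then show ?thesis
      using N by (simp add: col mod_eq_shift_iff[OF True])
  qed
  have "corr_sum N (ccc_from_cosf N U S m) (ccc_from_cosf N U S m') \<tau>
      = (\<Sum>n<N. \<Sum>l<length (S m). r l * (U n (l mod N) * cnj (U n (nat (int l + \<tau>) mod N))))"
    unfolding corr_sum_def aper_corr_def length_ccc_from_cosf seq_at_ccc_from_cosf r_def
    by (intro sum.cong refl) (simp add: algebra_simps)
  also have "\<dots> = (\<Sum>l<length (S m). r l * (\<Sum>n<N. U n (l mod N) * cnj (U n (nat (int l + \<tau>) mod N))))"
    by (subst sum.swap) (simp add: sum_distrib_left)
  also have "\<dots> = (\<Sum>l<length (S m). complex_of_real \<alpha> * (if int N dvd \<tau> then r l else 0))"
    by (simp only: phase)
  also have "\<dots> = complex_of_real \<alpha> * (if int N dvd \<tau> then aper_corr (S m) (S m') \<tau> else 0)"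
    unfolding aper_corr_def r_def by (simp add: sum_distrib_left)
  finally show ?thesis .
qed

theorem theorem5:
  fixes N :: nat and Lset :: "nat set"
    and S :: "nat \<Rightarrow> complex list" and U :: "nat \<Rightarrow> nat \<Rightarrow> complex"
  assumes "N \<ge> 1"
    and "is_N_CO_SF N N Lset S"
    and "unitary_like N U"
  shows "is_CCC N N Lset (ccc_from_cosf N U S)"
proof -
  obtain \<alpha> where col:
    "\<forall>a<N. \<forall>b<N. (\<Sum>k<N. U k a * cnj (U k b)) = (if a = b then complex_of_real \<alpha> else 0)"
    using unitary_like_columns[OF assms(3)] by blast
  have co: "\<And>m m' k. m < N \<Longrightarrow> m' < N \<Longrightarrow> aper_corr (S m) (S m') (k * int N) =
          (if m = m' \<and> k = 0 then seq_energy (S m) else 0)"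
    and L: "Lset = (\<lambda>m. length (S m)) ` {..<N}"
    using assms(2) unfolding is_N_CO_SF_def by auto
  note corr = corr_sum_ccc_from_cosf[OF assms(1) col]
  have "corr_sum N (ccc_from_cosf N U S m) (ccc_from_cosf N U S m') \<tau> =
        (if m = m' \<and> \<tau> = 0 then set_energy N (ccc_from_cosf N U S m) else 0)"
    if "m < N" "m' < N" for m m' \<tau>
  proof (cases "int N dvd \<tau>")
    case False
    then show ?thesis unfolding set_energy_def corr by auto
  next
    case True
    then obtain k where k: "\<tau> = k * int N" by (metis dvd_def mult.commute)
    then have "k = 0 \<longleftrightarrow> \<tau> = 0" using assms(1) by auto
    then show ?thesis unfolding set_energy_def corr using co[OF that] k
      by (auto simp: seq_energy_def)
  qed
  then show ?thesis unfolding is_CCC_def using L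
    by (intro conjI exI[of _ "\<lambda>m. length (S m)"]) auto
qed

end
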